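(* Let $(G,Q)$ be either $(\mathrm{GL}_n(q),q)$ or $(\mathrm{GU}_n(q),q^2)$, with natural module $V=\mathbb{F}_Q^n$. For $1\le j\le n$, let $N_j$ be the number of $G$-orbits on the set of ordered $j$-tuples $(v_1,\dots,v_j)$ with $v_i\in V$. Then $N_j\le 8q^{j^2/4}$ in the first case and $N_j\le 2q^{j^2}$ in the second case. *)

theory Defs
  imports "HOL-Analysis.Analysis"
begin

definition GL_grp :: "('a::field ^'n^'n) set" where
  "GL_grp = {A. invertible A}"

text \<open>Conjugate transpose over F_{q^2}, where conjugation is the field automorphism x \<mapsto> x^q.\<close>
definition conj_transpose :: "nat \<Rightarrow> 'a::field ^'n^'n \<Rightarrow> 'a ^'n^'n" where
  "conj_transpose q A = (\<chi> i j. (A $ j $ i) ^ q)"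

text \<open>The general unitary group GU_n(q) inside GL_n(q^2), preserving the standard
  nondegenerate Hermitian form (x,y) \<mapsto> sum x_i y_i^q.\<close>
definition GU_grp :: "nat \<Rightarrow> ('a::field ^'n^'n) set" where
  "GU_grp q = {A. conj_transpose q A ** A = mat 1}"

definition tuple_orbits :: "('a::field ^'n^'n) set \<Rightarrow> nat \<Rightarrow> ('a^'n) list set set" where
  "tuple_orbits G j =
     (\<lambda>vs. {map (\<lambda>v. A *v v) vs | A. A \<in> G}) ` {vs :: ('a^'n) list. length vs = j}"

end

theory Submission
  imports Defs "HOL-Computational_Algebra.Primes" "HOL-Computational_Algebra.Polynomial"
begin

text \<open>Encode a tuple \<open>(v\<^sub>1, \<dots>, v\<^sub>j)\<close> from the back: if \<open>v\<^sub>i\<close> depends on the pivots (a basis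
  extracted from \<open>v\<^sub>i\<^sub>+\<^sub>1, \<dots>, v\<^sub>j\<close>), record its coordinates; otherwise record nothing for
  \<open>GL\<close>, and its Hermitian products with the pivots and its norm for \<open>GU\<close>.  Tuples with the same
  code lie in one orbit: the map is extended one vector at a time by a transvection fixing the
  span of the later vectors, in the unitary case by at most two unitary ones (Witt's lemma).
  The number of codes with \<open>k\<close> dependent entries satisfies a \<open>q\<close>-binomial recursion and is at most
  \<open>q^(k(j - k))\<close> resp. \<open>q^(j\<^sup>2 - k\<^sup>2)\<close> divided by \<open>\<Prod>i = 1..k. 1 - x^i\<close> with \<open>x = 1/q\<close> resp.
  \<open>x = 1/q\<^sup>2\<close>, a product that stays above \<open>2/7\<close> resp. \<open>2/3\<close>.\<close>

section \<open>Finite fields\<close>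

lemma power_card_eq_self:
  fixes x :: "'a::{field,finite}"
  shows "x ^ CARD('a) = x"
proof (cases "x = 0")
  case True
  then show ?thesis by simp
next
  case False
  define U where "U = UNIV - {0::'a}"
  have "(\<Prod>y\<in>U. x * y) = \<Prod>U"
    by (rule prod.reindex_bij_witness[of _ "\<lambda>y. y / x" "\<lambda>y. x * y"]) (use False in \<open>auto simp: U_def\<close>)
  moreover have "(\<Prod>y\<in>U. x * y) = x ^ card U * \<Prod>U"
    by (simp add: prod.distrib)
  moreover have "\<Prod>U \<noteq> 0"
    by (simp add: U_def)
  ultimately have "x ^ card U = 1"
    by simp
  moreover have "CARD('a) = Suc (card U)"
    by (simp add: U_def card_Diff_singleton card_gt_0_iff)
  ultimately show ?thesis
    by simp
qed

lemma card_field_ge_2: "CARD('a::{field,finite}) \<ge> 2"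
proof -
  have "card {0::'a, 1} \<le> CARD('a)"
    by (rule card_mono) auto
  then show ?thesis
    by simp
qed

lemma prime_CHAR_finite_field: "prime CHAR('a::{field,finite})"
  by (rule prime_CHAR_semidom) (simp add: finite_imp_CHAR_pos)

lemma CHAR_gt_1_finite_field [simp]: "1 < CHAR('a::{field,finite})"
  using prime_CHAR_finite_field prime_gt_1_nat by blast

lemma CHAR_pos_finite_field [simp]: "0 < CHAR('a::{field,finite})"
  using CHAR_gt_1_finite_field[where 'a='a] by linarith

lemma of_nat_mod_CHAR: "of_nat (n mod CHAR('a)) = (of_nat n :: 'a::comm_ring_1)"
proof -
  have "(of_nat n :: 'a) = of_nat (n mod CHAR('a) + CHAR('a) * (n div CHAR('a)))"
    by simp
  then show ?thesis
    by (simp only: of_nat_add of_nat_mult of_nat_CHAR) simp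
qed

text \<open>The span of a list over the prime field, built one generator at a time; each generator
  multiplies its size by the characteristic or leaves it unchanged, so the field has prime power
  order.\<close>
fun prime_span :: "'a::field list \<Rightarrow> 'a set" where
  "prime_span [] = {0}"
| "prime_span (y # ys) = (\<lambda>(s, c). s + of_nat c * y) ` (prime_span ys \<times> {..<CHAR('a)})"

declare prime_span.simps(2) [simp del]

lemma in_prime_span_Cons:
  "s \<in> prime_span ys \<Longrightarrow> c < CHAR('a) \<Longrightarrow> s + of_nat c * y \<in> prime_span (y # ys :: 'a::field list)"
  by (force simp: prime_span.simps(2))

lemma prime_span_ConsE:
  assumes "x \<in> prime_span (y # ys)"
  obtains s c where "s \<in> prime_span ys" "c < CHAR('a)" "x = s + of_nat c * (y :: 'a::field)"
  using assms by (auto simp: prime_span.simps(2))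

lemma zero_in_prime_span: "0 \<in> prime_span (ys :: 'a::{field,finite} list)"
proof (induction ys)
  case (Cons y ys)
  show ?case
    using in_prime_span_Cons[OF Cons.IH, of 0 y] by simp
qed simp

lemma prime_span_mono_Cons: "prime_span ys \<subseteq> prime_span (y # ys :: 'a::{field,finite} list)"
  using in_prime_span_Cons[of _ ys 0 y] by auto

lemma prime_span_add:
  fixes ys :: "'a::{field,finite} list"
  shows "s \<in> prime_span ys \<Longrightarrow> t \<in> prime_span ys \<Longrightarrow> s + t \<in> prime_span ys"
proof (induction ys arbitrary: s t)
  case (Cons y ys)
  obtain s' c t' d where st: "s = s' + of_nat c * y" "t = t' + of_nat d * y"
    and in_span: "s' \<in> prime_span ys" "t' \<in> prime_span ys"
    using Cons.prems by (elim prime_span_ConsE) blast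
  have "s + t = (s' + t') + of_nat ((c + d) mod CHAR('a)) * y"
    by (simp add: st of_nat_mod_CHAR algebra_simps)
  then show ?case
    using in_prime_span_Cons[OF Cons.IH[OF in_span]] by simp
qed simp

lemma prime_span_of_nat_mult:
  fixes ys :: "'a::{field,finite} list"
  shows "s \<in> prime_span ys \<Longrightarrow> of_nat m * s \<in> prime_span ys"
proof (induction ys arbitrary: s)
  case (Cons y ys)
  obtain s' c where s: "s = s' + of_nat c * y" and in_span: "s' \<in> prime_span ys"
    using Cons.prems by (elim prime_span_ConsE) blast
  have "of_nat m * s = of_nat m * s' + of_nat ((m * c) mod CHAR('a)) * y"
    by (simp add: s of_nat_mod_CHAR algebra_simps)
  then show ?case
    using in_prime_span_Cons[OF Cons.IH[OF in_span]] by simp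
qed simp

lemma set_subset_prime_span: "set ys \<subseteq> prime_span (ys :: 'a::{field,finite} list)"
proof (induction ys)
  case (Cons y ys)
  have "0 + of_nat 1 * y \<in> prime_span (y # ys)"
    using CHAR_gt_1_finite_field[where 'a='a] by (intro in_prime_span_Cons zero_in_prime_span) simp
  then have "y \<in> prime_span (y # ys)"
    by simp
  then show ?case
    using Cons prime_span_mono_Cons[of ys y] by auto
qed simp

text \<open>Every \<open>of_nat m\<close> with \<open>0 < m < p\<close> is invertible in the prime field, so \<open>y\<close> would
  lie in the span as soon as such a multiple of it does.\<close>
lemma inj_on_prime_span_Cons:
  fixes y :: "'a::{field,finite}"
  assumes "y \<notin> prime_span ys"
  shows "inj_on (\<lambda>(s, c). s + of_nat c * y) (prime_span ys \<times> {..<CHAR('a)})"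
proof -
  have no_collision: False if s: "s \<in> prime_span ys" "s' \<in> prime_span ys" and c: "c' < c" "c < CHAR('a)"
    and eq: "s + of_nat c * y = s' + of_nat c' * y" for s s' c c'
  proof -
    define m where "m = c - c'"
    have "of_nat (CHAR('a) - 1) = (- 1 :: 'a)"
      using CHAR_pos_finite_field[where 'a='a] by (simp only: of_nat_diff) simp
    then have "of_nat m * y = s' + of_nat (CHAR('a) - 1) * s"
      using eq c by (simp add: m_def of_nat_diff algebra_simps)
    then have my: "of_nat m * y \<in> prime_span ys"
      using s by (simp add: prime_span_add prime_span_of_nat_mult)
    have "\<not> CHAR('a) dvd m"
      using c by (simp add: m_def nat_dvd_not_less)
    then have "coprime m CHAR('a)"
      using prime_imp_coprime[OF prime_CHAR_finite_field] coprime_commute by blast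
    then obtain u v where uv: "m * u = CHAR('a) * v + 1"
      using bezout_nat[of m "CHAR('a)"] c by (auto simp: m_def)
    have "(of_nat u * of_nat m :: 'a) = of_nat (CHAR('a) * v + 1)"
      by (simp only: uv mult.commute[of u] flip: of_nat_mult)
    then have "of_nat u * (of_nat m * y) = y"
      by (simp add: mult.assoc[symmetric])
    then show False
      using assms prime_span_of_nat_mult[OF my, of u] by argo
  qed
  then show ?thesis
  proof (intro inj_onI, clarify)
    fix s c s' c'
    assume s: "s \<in> prime_span ys" "s' \<in> prime_span ys" and c: "c < CHAR('a)" "c' < CHAR('a)"
      and eq: "s + of_nat c * y = s' + of_nat c' * y"
    have "c = c'"
      using no_collision[OF s _ c(1) eq] no_collision[OF s(2,1) _ c(2) eq[symmetric]]
      by (cases c c' rule: linorder_cases) (simp_all add: eq)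
    then show "s = s' \<and> c = c'"
      using eq by simp
  qed
qed

lemma card_prime_span: "\<exists>k. card (prime_span (ys :: 'a::{field,finite} list)) = CHAR('a) ^ k"
proof (induction ys)
  case Nil
  have "card (prime_span ([] :: 'a list)) = CHAR('a) ^ 0"
    by simp
  then show ?case
    by blast
next
  case (Cons y ys)
  then obtain k where k: "card (prime_span ys) = CHAR('a) ^ k"
    by blast
  show ?case
  proof (cases "y \<in> prime_span ys")
    case True
    have "prime_span (y # ys) \<subseteq> prime_span ys"
    proof
      fix x
      assume "x \<in> prime_span (y # ys)"
      then obtain s c where "s \<in> prime_span ys" "x = s + of_nat c * y"
        by (elim prime_span_ConsE)
      then show "x \<in> prime_span ys"
        using True by (simp add: prime_span_add prime_span_of_nat_mult)
    qed
    then have "prime_span (y # ys) = prime_span ys"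
      using prime_span_mono_Cons[of ys y] by blast
    then show ?thesis
      using k by metis
  next
    case False
    have "card (prime_span (y # ys)) = card (prime_span ys) * CHAR('a)"
      by (simp add: prime_span.simps(2) card_image[OF inj_on_prime_span_Cons[OF False]] card_cartesian_product)
    then have "card (prime_span (y # ys)) = CHAR('a) ^ Suc k"
      using k by simp
    then show ?thesis
      by blast
  qed
qed

lemma card_eq_CHAR_power: "\<exists>k. CARD('a::{field,finite}) = CHAR('a) ^ k"
proof -
  obtain ys :: "'a list" where "set ys = UNIV"
    using finite_list[of "UNIV :: 'a set"] by auto
  then have "prime_span ys = UNIV"
    using set_subset_prime_span[of ys] by blast
  moreover obtain k where "card (prime_span ys) = CHAR('a) ^ k"
    using card_prime_span by blast
  ultimately show ?thesis
    by auto
qed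

lemma card_roots_power_add_linear_le:
  fixes c :: "'a::idom"
  assumes "2 \<le> n"
  shows "card {x. x ^ n + c * x = 0} \<le> n"
proof -
  define P :: "'a poly" where "P = monom 1 n + [:0, c:]"
  have "degree [:0, c:] < degree (monom (1::'a) n)"
    using assms by (simp add: degree_monom_eq)
  then have deg: "degree P = n"
    by (simp add: P_def degree_add_eq_left degree_monom_eq)
  then have "P \<noteq> 0"
    using assms by auto
  moreover have "{x. poly P x = 0} = {x. x ^ n + c * x = 0}"
    by (simp add: P_def poly_monom mult.commute)
  ultimately show ?thesis
    using card_poly_roots_bound[of P] deg by simp
qed

lemma card_le_card_range_mult_card_kernel:
  fixes f :: "'a::{ab_group_add,finite} \<Rightarrow> 'b::ab_group_add"
  assumes add: "\<And>x y. f (x + y) = f x + f y"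
  shows "CARD('a) \<le> card (range f) * card {x. f x = 0}"
proof -
  have fiber: "card {x. f x = f x0} \<le> card {x. f x = 0}" for x0
  proof -
    have "f (x - x0) = f x - f x0" for x
      using add[of "x - x0" x0] by (simp add: algebra_simps)
    then have "{x. f x = f x0} \<subseteq> (\<lambda>k. x0 + k) ` {x. f x = 0}"
      by (auto intro!: image_eqI[of _ _ "_ - x0"])
    then have "card {x. f x = f x0} \<le> card ((\<lambda>k. x0 + k) ` {x. f x = 0})"
      by (rule card_mono[rotated]) simp
    also have "\<dots> \<le> card {x. f x = 0}"
      by (rule card_image_le) simp
    finally show ?thesis .
  qed
  have "UNIV = (\<Union>c\<in>range f. {x. f x = c})"
    by auto
  then have "CARD('a) = card (\<Union>c\<in>range f. {x. f x = c})"
    by simp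
  also have "\<dots> \<le> (\<Sum>c\<in>range f. card {x. f x = c})"
    by (rule card_UN_le) simp
  also have "\<dots> \<le> (\<Sum>c\<in>range f. card {x. f x = 0})"
    by (rule sum_mono) (use fiber in auto)
  finally show ?thesis
    by simp
qed

section \<open>Linear algebra over a field\<close>

definition dot :: "'a::field^'n \<Rightarrow> 'a^'n \<Rightarrow> 'a" where
  "dot c x = (\<Sum>k\<in>UNIV. c $ k * x $ k)"

lemma dot_add_right: "dot c (x + y) = dot c x + dot c y"
  by (simp add: dot_def algebra_simps sum.distrib)

lemma dot_scale_right: "dot c (a *s x) = a * dot c x"
  by (simp add: dot_def algebra_simps sum_distrib_left)

lemma dot_diff_right: "dot c (x - y) = dot c x - dot c y"
  by (simp add: dot_def algebra_simps sum_subtractf)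

lemma dot_add_left: "dot (c + c') x = dot c x + dot c' x"
  by (simp add: dot_def algebra_simps sum.distrib)

lemma dot_scale_left: "dot (a *s c) x = a * dot c x"
  by (simp add: dot_def algebra_simps sum_distrib_left)

lemma dot_matrix_row: "dot (row k A) x = (A *v x) $ k"
  by (simp add: dot_def row_def matrix_vector_mult_def)

lemma exists_dot_vanishing_on_span:
  fixes S :: "('a::field^'n) set"
  assumes "v \<notin> vec.span S"
  shows "\<exists>c. (\<forall>u\<in>vec.span S. dot c u = 0) \<and> dot c v = 1"
proof -
  obtain B where B: "B \<subseteq> vec.span S" "vec.independent B" "vec.span S \<subseteq> vec.span B"
    using vec.maximal_independent_subset[of "vec.span S"] by blast
  have "vec.span B \<subseteq> vec.span S"
    using vec.span_mono[OF B(1)] by (simp only: vec.span_span)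
  then have span_B: "vec.span B = vec.span S"
    using B(3) by (rule subset_antisym)
  then have "v \<notin> vec.span B"
    using assms by simp
  then have "vec.independent (insert v B)" and "v \<notin> B"
    using vec.independent_insertI[OF _ B(2)] vec.span_base by blast+
  fix k :: 'n
  obtain g where g: "Vector_Spaces.linear (*s) (*s) g"
    "\<forall>x\<in>insert v B. g x = (if x = v then axis k 1 else 0 :: 'a^'n)"
    using vec.linear_independent_extend[OF \<open>vec.independent (insert v B)\<close>,
        where f = "\<lambda>x. if x = v then axis k 1 else 0"] by blast
  have "g b = 0" if "b \<in> B" for b
    using g(2) that \<open>v \<notin> B\<close> by auto
  then have "\<forall>u\<in>vec.span B. g u = 0"
    using vec.linear_eq_0_on_span[OF g(1)] by blast
  moreover have "dot (row k (matrix g)) x = g x $ k" for x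
    by (simp add: dot_matrix_row matrix_works[OF g(1)])
  ultimately show ?thesis
    using g(2) span_B by (intro exI[of _ "row k (matrix g)"]) (simp add: axis_def)
qed

lemma exists_dot_nonzero_off_span:
  fixes S :: "('a::field^'n) set"
  assumes "v \<notin> vec.span S" "w \<notin> vec.span S"
  shows "\<exists>c. (\<forall>u\<in>vec.span S. dot c u = 0) \<and> dot c v \<noteq> 0 \<and> dot c w \<noteq> 0"
proof -
  obtain c1 where c1: "\<forall>u\<in>vec.span S. dot c1 u = 0" "dot c1 v = 1"
    using exists_dot_vanishing_on_span[OF assms(1)] by blast
  obtain c2 where c2: "\<forall>u\<in>vec.span S. dot c2 u = 0" "dot c2 w = 1"
    using exists_dot_vanishing_on_span[OF assms(2)] by blast
  consider "dot c1 w \<noteq> 0" | "dot c2 v \<noteq> 0" | "dot c1 w = 0" "dot c2 v = 0"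
    by blast
  then show ?thesis
  proof cases
    case 1
    then show ?thesis
      using c1 by (intro exI[of _ c1]) simp
  next
    case 2
    then show ?thesis
      using c2 by (intro exI[of _ c2]) simp
  next
    case 3
    then show ?thesis
      using c1 c2 by (intro exI[of _ "c1 + c2"]) (simp add: dot_add_left)
  qed
qed

definition transvection :: "'a::field^'n \<Rightarrow> 'a^'n \<Rightarrow> 'a^'n^'n" where
  "transvection c d = mat 1 + (\<chi> i j. d $ i * c $ j)"

lemma transvection_apply: "transvection c d *v x = x + dot c x *s d"
  unfolding transvection_def matrix_vector_mult_add_rdistrib matrix_vector_mul_lid
  by (simp add: matrix_vector_mult_def dot_def vec_eq_iff sum_distrib_left algebra_simps)

lemma invertible_transvection:
  assumes "dot c d \<noteq> - 1"
  shows "invertible (transvection c d)"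
proof -
  define c' where "c' = (- 1 / (1 + dot c d)) *s c"
  have "1 + dot c d \<noteq> 0"
    using assms by (simp add: add_eq_0_iff)
  then have "dot c' x * (1 + dot c d) + dot c x = 0" for x
    unfolding c'_def dot_scale_left by simp
  moreover have "transvection c d *v (transvection c' d *v x)
      = x + (dot c' x * (1 + dot c d) + dot c x) *s d" for x
    by (simp add: transvection_apply dot_add_right dot_scale_right vector_sadd_rdistrib
        algebra_simps)
  ultimately have "transvection c d *v (transvection c' d *v x) = x" for x
    by simp
  then have "transvection c d ** transvection c' d = mat 1"
    by (simp add: matrix_eq flip: matrix_vector_mul_assoc)
  then show ?thesis
    using invertible_right_inverse by blast
qed

lemma GL_extend_off_span:
  fixes S :: "('a::field^'n) set"
  assumes "v \<notin> vec.span S" "w \<notin> vec.span S"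
  shows "\<exists>M. invertible M \<and> (\<forall>u\<in>vec.span S. M *v u = u) \<and> M *v v = w"
proof -
  obtain c where c: "\<forall>u\<in>vec.span S. dot c u = 0" "dot c v \<noteq> 0" "dot c w \<noteq> 0"
    using exists_dot_nonzero_off_span[OF assms] by blast
  define c0 where "c0 = (1 / dot c v) *s c"
  define M where "M = transvection c0 (w - v)"
  have c0: "dot c0 v = 1" "dot c0 w \<noteq> 0" "\<forall>u\<in>vec.span S. dot c0 u = 0"
    using c by (simp_all add: c0_def dot_scale_left)
  then have "invertible M"
    unfolding M_def by (intro invertible_transvection) (simp add: dot_diff_right)
  moreover have "\<forall>u\<in>vec.span S. M *v u = u" "M *v v = w"
    using c0 by (simp_all add: M_def transvection_apply)
  ultimately show ?thesis
    by blast
qed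

lemma matrix_vector_mult_compose: "(*v) (A ** B) = (*v) A \<circ> (*v) B"
  by (auto simp: matrix_vector_mul_assoc)

fun pivots :: "('a::field^'n) list \<Rightarrow> ('a^'n) list" where
  "pivots [] = []"
| "pivots (v # xs) = (if v \<in> vec.span (set xs) then pivots xs else v # pivots xs)"

fun num_dependent :: "('a::field^'n) list \<Rightarrow> nat" where
  "num_dependent [] = 0"
| "num_dependent (v # xs) = (if v \<in> vec.span (set xs) then Suc (num_dependent xs) else num_dependent xs)"

lemma span_pivots: "vec.span (set (pivots xs)) = vec.span (set xs)"
proof (induction xs)
  case (Cons v xs)
  have "vec.span (insert v (set (pivots xs))) = vec.span (insert v (set xs))"
    by (simp only: vec.span_insert Cons.IH)
  then show ?case
    using Cons.IH by (simp add: vec.span_redundant)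
qed simp

lemma num_dependent_le_length: "num_dependent xs \<le> length xs"
  by (induction xs) auto

lemma length_pivots: "length (pivots xs) = length xs - num_dependent xs"
  by (induction xs) (auto simp: Suc_diff_le num_dependent_le_length)

lemma pivots_map:
  fixes A :: "'a::field^'n^'n"
  assumes "inj ((*v) A)"
  shows "pivots (map ((*v) A) xs) = map ((*v) A) (pivots xs)"
proof -
  have "A *v v \<in> vec.span ((*v) A ` S) \<longleftrightarrow> v \<in> vec.span S" for v and S :: "('a^'n) set"
    using assms by (auto simp: vec.linear_span_image[OF matrix_vector_mul_linear_gen] inj_image_mem_iff)
  then show ?thesis
    by (induction xs) simp_all
qed

fun lincomb :: "'a::field list \<Rightarrow> ('a^'n) list \<Rightarrow> 'a^'n" where
  "lincomb (a # as) (p # ps) = a *s p + lincomb as ps"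
| "lincomb _ _ = 0"

lemma exists_lincomb:
  "v \<in> vec.span (set ps) \<Longrightarrow> \<exists>as. length as = length ps \<and> v = lincomb as ps"
proof (induction ps arbitrary: v)
  case (Cons p ps)
  then obtain a where "v - a *s p \<in> vec.span (set ps)"
    using vec.span_breakdown_eq[of v p "set ps"] by auto
  then obtain as where "length as = length ps" "v - a *s p = lincomb as ps"
    using Cons.IH by blast
  then show ?case
    by (intro exI[of _ "a # as"]) (auto simp: algebra_simps)
qed simp

lemma matrix_vector_mult_lincomb: "A *v lincomb as ps = lincomb as (map ((*v) A) ps)"
  by (induction as ps rule: lincomb.induct) (simp_all add: vec.add vec.scale)

definition coords :: "('a::field^'n) list \<Rightarrow> 'a^'n \<Rightarrow> 'a list" where
  "coords ps v = (SOME as. length as = length ps \<and> v = lincomb as ps)"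

lemma coords:
  assumes "v \<in> vec.span (set ps)"
  shows "length (coords ps v) = length ps" and "v = lincomb (coords ps v) ps"
  using someI_ex[OF exists_lincomb[OF assms]] by (simp_all add: coords_def)

section \<open>Pivot codes and orbits\<close>

fun pivot_code ::
  "(('a::field^'n) list \<Rightarrow> 'a^'n \<Rightarrow> 'd) \<Rightarrow> ('a^'n) list \<Rightarrow> ('a list + 'd) list" where
  "pivot_code g [] = []"
| "pivot_code g (v # xs) =
    (if v \<in> vec.span (set xs) then Inl (coords (pivots xs) v) else Inr (g (pivots xs) v))
      # pivot_code g xs"

lemma length_pivot_code: "length (pivot_code g xs) = length xs"
  by (induction xs) auto

lemma matrix_vector_mult_eq_if_same_coords:
  fixes A :: "'a::field^'n^'n"
  assumes "inj ((*v) A)" and ys: "map ((*v) A) xs = ys"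
    and "v \<in> vec.span (set xs)" "w \<in> vec.span (set ys)"
    and "coords (pivots xs) v = coords (pivots ys) w"
  shows "A *v v = w"
proof -
  have "v \<in> vec.span (set (pivots xs))" "w \<in> vec.span (set (pivots ys))"
    using assms(3,4) by (simp_all add: span_pivots)
  then have "A *v v = lincomb (coords (pivots xs) v) (map ((*v) A) (pivots xs))"
    and "w = lincomb (coords (pivots ys) w) (pivots ys)"
    by (simp_all flip: coords(2) matrix_vector_mult_lincomb)
  then show ?thesis
    using assms(5) by (simp add: pivots_map[OF assms(1)] flip: ys)
qed

lemma pivot_code_eq_imp_same_orbit:
  fixes G :: "('a::field^'n^'n) set"
  assumes mult: "\<And>A B. A \<in> G \<Longrightarrow> B \<in> G \<Longrightarrow> A ** B \<in> G"
    and one: "mat 1 \<in> G"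
    and inj: "\<And>A. A \<in> G \<Longrightarrow> inj ((*v) A)"
    and equivariant: "\<And>A ps v. A \<in> G \<Longrightarrow> g (map ((*v) A) ps) (A *v v) = g ps v"
    and extend: "\<And>ps v w. v \<notin> vec.span (set ps) \<Longrightarrow> w \<notin> vec.span (set ps) \<Longrightarrow> g ps v = g ps w
      \<Longrightarrow> \<exists>C\<in>G. (\<forall>u\<in>vec.span (set ps). C *v u = u) \<and> C *v v = w"
  shows "pivot_code g xs = pivot_code g ys \<Longrightarrow> \<exists>A\<in>G. map ((*v) A) xs = ys"
proof (induction xs arbitrary: ys)
  case Nil
  then show ?case
    using one length_pivot_code[of g ys] by auto
next
  case (Cons v xs)
  then obtain w ys' where ys: "ys = w # ys'"
    using length_pivot_code[of g ys] by (cases ys) auto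
  then obtain A where A: "A \<in> G" "map ((*v) A) xs = ys'"
    using Cons by auto
  have span_iff: "A *v v \<in> vec.span (set ys') \<longleftrightarrow> v \<in> vec.span (set xs)"
    using inj[OF A(1)] by (auto simp: A(2)[symmetric] vec.linear_span_image inj_image_mem_iff)
  have head: "(if v \<in> vec.span (set xs) then Inl (coords (pivots xs) v) else Inr (g (pivots xs) v))
    = (if w \<in> vec.span (set ys') then Inl (coords (pivots ys') w) else Inr (g (pivots ys') w))"
    using Cons.prems ys by simp
  show ?case
  proof (cases "v \<in> vec.span (set xs)")
    case True
    with head have "A *v v = w"
      by (intro matrix_vector_mult_eq_if_same_coords[OF inj[OF A(1)] A(2)]) (auto split: if_splits)
    then show ?thesis
      using A ys by auto
  next
    case False
    with head span_iff have off_span: "A *v v \<notin> vec.span (set ys')" "w \<notin> vec.span (set ys')"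
      and "g (pivots ys') w = g (pivots xs) v"
      by (auto split: if_splits)
    then have "g (pivots ys') (A *v v) = g (pivots ys') w"
      using equivariant[OF A(1)] by (simp add: pivots_map[OF inj[OF A(1)]] flip: A(2))
    then obtain C where C: "C \<in> G" "\<forall>u\<in>vec.span (set ys'). C *v u = u" "C *v (A *v v) = w"
      using extend[where ps = "pivots ys'"] off_span by (auto simp: span_pivots)
    have "map ((*v) C) ys' = ys'"
      using C(2) vec.span_base by (auto intro: map_idI)
    then have "map ((*v) (C ** A)) (v # xs) = ys"
      using A(2) C(3) ys by (simp add: matrix_vector_mult_compose flip: map_map)
    then show ?thesis
      using mult[OF C(1) A(1)] by blast
  qed
qed

lemma card_image_le_if_determined:
  assumes "finite A" and "\<And>x y. x \<in> A \<Longrightarrow> y \<in> A \<Longrightarrow> f x = f y \<Longrightarrow> h x = h y"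
  shows "card (h ` A) \<le> card (f ` A)"
proof -
  have "h x = h (inv_into A f (f x))" if "x \<in> A" for x
    using that by (intro assms(2)) (simp_all add: inv_into_into f_inv_into_f)
  then have "h ` A = (\<lambda>c. h (inv_into A f c)) ` f ` A"
    unfolding image_image by (rule image_cong[OF refl])
  then show ?thesis
    using card_image_le[OF finite_imageI[OF assms(1)]] by simp
qed

lemma card_tuple_orbits_le:
  fixes G :: "('a::{field,finite}^'n^'n) set" and f :: "('a^'n) list \<Rightarrow> 'c"
  assumes mult: "\<And>A B. A \<in> G \<Longrightarrow> B \<in> G \<Longrightarrow> A ** B \<in> G"
    and same_orbit: "\<And>xs ys. f xs = f ys \<Longrightarrow> \<exists>A\<in>G. map ((*v) A) xs = ys"
  shows "card (tuple_orbits G j) \<le> card (f ` {xs. length xs = j})"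
proof -
  define orbit where "orbit xs = {map ((*v) A) xs | A. A \<in> G}" for xs :: "('a^'n) list"
  have sub: "orbit ys \<subseteq> orbit xs" if same: "f xs = f ys" for xs ys
  proof
    fix zs
    assume "zs \<in> orbit ys"
    then obtain B where B: "B \<in> G" "zs = map ((*v) B) ys"
      by (auto simp: orbit_def)
    obtain A where A: "A \<in> G" "map ((*v) A) xs = ys"
      using same_orbit[OF same] by blast
    have "zs = map ((*v) (B ** A)) xs"
      using A(2) B(2) by (simp add: matrix_vector_mult_compose flip: map_map)
    then show "zs \<in> orbit xs"
      using mult[OF B(1) A(1)] by (auto simp: orbit_def)
  qed
  then have determined: "orbit xs = orbit ys" if "f xs = f ys" for xs ys
    using sub[of ys xs] that by (intro subset_antisym) simp_all
  have "tuple_orbits G j = orbit ` {xs. length xs = j}"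
    by (simp add: tuple_orbits_def orbit_def)
  then show ?thesis
    using card_image_le_if_determined[OF finite_list_length determined] by simp
qed

lemma card_lists_length_UNIV: "card {xs :: 'a::finite list. length xs = n} = CARD('a) ^ n"
  using card_lists_length_eq[of "UNIV :: 'a set" n] by simp

text \<open>\<open>code_set D m k\<close> contains the pivot codes of \<open>m\<close>-tuples with \<open>k\<close> dependent entries: a tail
  of length \<open>l\<close> with \<open>d\<close> dependent entries has \<open>l - d\<close> pivots, which fixes the number of
  coordinates of a dependent entry and the range \<open>D (l - d)\<close> of the datum of an independent one.\<close>
fun code_set :: "(nat \<Rightarrow> 'd set) \<Rightarrow> nat \<Rightarrow> nat \<Rightarrow> ('a list + 'd) list set" where
  "code_set D 0 k = (if k = 0 then {[]} else {})"
| "code_set D (Suc m) k =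
    (\<lambda>(d, l). Inr d # l) ` (D (m - k) \<times> code_set D m k) \<union>
    (if k = 0 then {} else (\<lambda>(c, l). Inl c # l) ` ({c. length c = m - (k - 1)} \<times> code_set D m (k - 1)))"

fun code_count :: "nat \<Rightarrow> (nat \<Rightarrow> nat) \<Rightarrow> nat \<Rightarrow> nat \<Rightarrow> nat" where
  "code_count Q b 0 k = (if k = 0 then 1 else 0)"
| "code_count Q b (Suc m) k =
    b (m - k) * code_count Q b m k + (if k = 0 then 0 else Q ^ (m - (k - 1)) * code_count Q b m (k - 1))"

lemma card_image_pair_le:
  assumes "finite A" "finite B" "card A \<le> a" "card B \<le> b"
  shows "finite ((\<lambda>(x, y). f x y) ` (A \<times> B)) \<and> card ((\<lambda>(x, y). f x y) ` (A \<times> B)) \<le> a * b"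
proof -
  have "card ((\<lambda>(x, y). f x y) ` (A \<times> B)) \<le> card A * card B"
    using card_image_le[of "A \<times> B"] assms(1,2) by (simp add: card_cartesian_product)
  also have "\<dots> \<le> a * b"
    using assms(3,4) by (rule mult_le_mono)
  finally show ?thesis
    using assms(1,2) by simp
qed

lemma card_code_set:
  assumes "\<And>l. finite (D l)" and "\<And>l. card (D l) \<le> b l"
  shows "finite (code_set D m k :: ('a::finite list + 'd) list set)
    \<and> card (code_set D m k :: ('a list + 'd) list set) \<le> code_count CARD('a) b m k"
proof (induction m arbitrary: k)
  case 0
  then show ?case
    by simp
next
  case (Suc m)
  define S1 :: "('a list + 'd) list set" where "S1 = (\<lambda>(d, l). Inr d # l) ` (D (m - k) \<times> code_set D m k)"
  define S2 :: "('a list + 'd) list set"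
    where "S2 = (\<lambda>(c, l). Inl c # l) ` ({c. length c = m - (k - 1)} \<times> code_set D m (k - 1))"
  have S1: "finite S1 \<and> card S1 \<le> b (m - k) * code_count CARD('a) b m k"
    unfolding S1_def by (rule card_image_pair_le) (use Suc.IH[of k] assms in auto)
  have S2: "finite S2 \<and> card S2 \<le> CARD('a) ^ (m - (k - 1)) * code_count CARD('a) b m (k - 1)"
    unfolding S2_def
    by (rule card_image_pair_le)
      (use Suc.IH[of "k - 1"] in \<open>simp_all add: finite_list_length card_lists_length_UNIV\<close>)
  show ?case
  proof (cases "k = 0")
    case True
    then show ?thesis
      using S1 by (simp add: S1_def)
  next
    case False
    then have "code_set D (Suc m) k = S1 \<union> S2"
      by (simp add: S1_def S2_def)
    then show ?thesis
      using S1 S2 False card_Un_le[of S1 S2] by simp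
  qed
qed

lemma pivot_code_in_code_set:
  assumes "\<And>ps v. g ps v \<in> D (length ps)"
  shows "length xs = m \<Longrightarrow> pivot_code g xs \<in> code_set D m (num_dependent xs)"
proof (induction xs arbitrary: m)
  case (Cons v xs)
  then obtain m' where m: "m = Suc m'" "length xs = m'"
    by auto
  have "length (pivots xs) = m' - num_dependent xs"
    using m(2) by (simp add: length_pivots)
  then show ?case
    using Cons.IH[OF m(2)] assms[of "pivots xs" v] coords(1)[of v "pivots xs"] m(1)
    by (auto simp: span_pivots)
qed simp

lemma card_pivot_codes_le:
  fixes g :: "('a::{field,finite}^'n) list \<Rightarrow> 'a^'n \<Rightarrow> 'd"
  assumes "\<And>ps v. g ps v \<in> D (length ps)" and "\<And>l. finite (D l)" and "\<And>l. card (D l) \<le> b l"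
  shows "card (pivot_code g ` {xs. length xs = m}) \<le> (\<Sum>k\<le>m. code_count CARD('a) b m k)"
proof -
  have "pivot_code g ` {xs. length xs = m} \<subseteq> (\<Union>k\<le>m. code_set D m k)"
    using pivot_code_in_code_set[of g D, OF assms(1)] num_dependent_le_length by fastforce
  then have "card (pivot_code g ` {xs. length xs = m})
      \<le> card (\<Union>k\<le>m. code_set D m k :: ('a list + 'd) list set)"
    using card_code_set[where 'a='a, OF assms(2,3)] by (intro card_mono) auto
  also have "\<dots> \<le> (\<Sum>k\<le>m. card (code_set D m k :: ('a list + 'd) list set))"
    by (rule card_UN_le) simp
  also have "\<dots> \<le> (\<Sum>k\<le>m. code_count CARD('a) b m k)"
    using card_code_set[where 'a='a, OF assms(2,3)] by (intro sum_mono) auto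
  finally show ?thesis .
qed

lemma card_GL_tuple_orbits_le:
  "card (tuple_orbits (GL_grp :: ('a::{field,finite}^'n^'n) set) j)
    \<le> (\<Sum>k\<le>j. code_count CARD('a) (\<lambda>_. 1) j k)"
proof -
  define g :: "('a^'n) list \<Rightarrow> 'a^'n \<Rightarrow> unit" where "g ps v = ()" for ps v
  have "card (tuple_orbits (GL_grp :: ('a^'n^'n) set) j) \<le> card (pivot_code g ` {xs. length xs = j})"
  proof (rule card_tuple_orbits_le)
    show "A ** B \<in> GL_grp" if "A \<in> GL_grp" "B \<in> GL_grp" for A B :: "'a^'n^'n"
      using that by (simp add: GL_grp_def invertible_mult)
    show "\<exists>A\<in>GL_grp. map ((*v) A) xs = ys" if "pivot_code g xs = pivot_code g ys" for xs ys
    proof (rule pivot_code_eq_imp_same_orbit[OF _ _ _ _ _ that])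
      show "mat 1 \<in> (GL_grp :: ('a^'n^'n) set)"
        by (auto simp: GL_grp_def invertible_def)
      show "\<exists>C\<in>GL_grp. (\<forall>u\<in>vec.span (set ps). C *v u = u) \<and> C *v v = w"
        if "v \<notin> vec.span (set ps)" "w \<notin> vec.span (set ps)" for ps and v w :: "'a^'n"
        using GL_extend_off_span[OF that] by (auto simp: GL_grp_def)
    qed (auto simp: GL_grp_def g_def invertible_mult inj_matrix_vector_mult)
  qed
  also have "\<dots> \<le> (\<Sum>k\<le>j. code_count CARD('a) (\<lambda>_. 1) j k)"
    by (rule card_pivot_codes_le[where D = "\<lambda>_. {()}"]) (simp_all add: g_def)
  finally show ?thesis .
qed

section \<open>The unitary group\<close>

locale unitary_field =
  fixes q :: nat and field_type :: "'b::{field,finite} itself"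
  assumes card_eq: "CARD('b) = q ^ 2"
begin

definition qconj :: "'b \<Rightarrow> 'b" where
  "qconj x = x ^ q"

definition qtrace :: "'b \<Rightarrow> 'b" where
  "qtrace x = x + qconj x"

lemma q_ge_2: "q \<ge> 2"
proof (rule ccontr)
  assume "\<not> q \<ge> 2"
  then have "q ^ 2 \<le> 1 ^ 2"
    by (intro power_mono) auto
  then show False
    using card_field_ge_2[where 'a='b] card_eq by simp
qed

lemma q_eq_CHAR_power: "\<exists>e. q = CHAR('b) ^ e"
proof -
  obtain k where "CARD('b) = CHAR('b) ^ k"
    using card_eq_CHAR_power by blast
  then have "q dvd CHAR('b) ^ k"
    using card_eq by (metis dvd_triv_left power2_eq_square)
  then show ?thesis
    using divides_primepow_nat[OF prime_CHAR_finite_field] by blast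
qed

lemma qconj_add: "qconj (x + y) = qconj x + qconj y"
proof -
  obtain e where "q = CHAR('b) ^ e"
    using q_eq_CHAR_power by blast
  then show ?thesis
    unfolding qconj_def by (rule freshmans_dream'[OF prime_CHAR_finite_field])
qed

lemma qconj_sum: "qconj (sum f A) = (\<Sum>i\<in>A. qconj (f i))"
proof -
  obtain e where "q = CHAR('b) ^ e"
    using q_eq_CHAR_power by blast
  then show ?thesis
    unfolding qconj_def by (rule freshmans_dream_sum'[OF prime_CHAR_finite_field])
qed

lemma qconj_mult: "qconj (x * y) = qconj x * qconj y"
  by (simp add: qconj_def power_mult_distrib)

lemma qconj_0 [simp]: "qconj 0 = 0"
  using q_ge_2 by (simp add: qconj_def)

lemma qconj_1 [simp]: "qconj 1 = 1"
  by (simp add: qconj_def)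

lemma qconj_qconj [simp]: "qconj (qconj x) = x"
proof -
  have "qconj (qconj x) = x ^ CARD('b)"
    by (simp add: qconj_def card_eq power2_eq_square power_mult)
  then show ?thesis
    by (simp add: power_card_eq_self)
qed

lemma qconj_eq_0_iff [simp]: "qconj x = 0 \<longleftrightarrow> x = 0"
  by (metis qconj_0 qconj_qconj)

lemma qconj_uminus: "qconj (- x) = - qconj x"
  using qconj_add[of x "- x"] by (simp add: eq_neg_iff_add_eq_0 add.commute)

lemma qconj_diff: "qconj (x - y) = qconj x - qconj y"
  using qconj_add[of x "- y"] by (simp add: qconj_uminus)

lemma qconj_divide: "qconj (x / y) = qconj x / qconj y"
  by (simp add: qconj_def power_divide)

lemma qconj_qtrace: "qconj (qtrace x) = qtrace x"
  by (simp add: qtrace_def qconj_add add.commute)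

lemma card_qconj_fixed_le: "card {x. qconj x = x} \<le> q"
  using card_roots_power_add_linear_le[OF q_ge_2, of "- 1 :: 'b"] by (simp add: qconj_def)

lemma card_qtrace_kernel_le: "card {x. qtrace x = 0} \<le> q"
  using card_roots_power_add_linear_le[OF q_ge_2, of "1 :: 'b"]
  by (simp add: qtrace_def qconj_def add.commute)

text \<open>The trace is additive with image inside the fixed field, and both the fixed field and
  the kernel have at most \<open>q\<close> elements; since \<open>q\<^sup>2 \<le> |image| |kernel|\<close>, all bounds are tight.\<close>
lemma card_qtrace_range_kernel: "range qtrace = {x. qconj x = x} \<and> card {x. qtrace x = 0} = q"
proof -
  have sub: "range qtrace \<subseteq> {x. qconj x = x}"
    using qconj_qtrace by auto
  then have "card (range qtrace) \<le> card {x. qconj x = x}"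
    by (intro card_mono) simp_all
  then have range_le: "card (range qtrace) \<le> q"
    using card_qconj_fixed_le by linarith
  have "qtrace (x + y) = qtrace x + qtrace y" for x y
    by (simp add: qtrace_def qconj_add algebra_simps)
  then have "CARD('b) \<le> card (range qtrace) * card {x. qtrace x = 0}"
    by (rule card_le_card_range_mult_card_kernel)
  then have "q * q \<le> card (range qtrace) * card {x. qtrace x = 0}"
    by (simp add: card_eq power2_eq_square)
  also have "\<dots> \<le> card (range qtrace) * q"
    using card_qtrace_kernel_le by simp
  finally have "q \<le> card (range qtrace)"
    using q_ge_2 by simp
  then have range_eq: "range qtrace = {x. qconj x = x}"
    using card_seteq[OF _ sub] card_qconj_fixed_le by simp
  have "q * q \<le> q * card {x. qtrace x = 0}"
    using \<open>q * q \<le> _\<close> mult_le_mono1[OF range_le, of "card {x. qtrace x = 0}"] by linarith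
  then have "q \<le> card {x. qtrace x = 0}"
    using q_ge_2 by simp
  then show ?thesis
    using range_eq card_qtrace_kernel_le by simp
qed

lemma qtrace_onto_fixed: "qconj c = c \<Longrightarrow> \<exists>u. qtrace u = c"
  using card_qtrace_range_kernel by (auto simp: set_eq_iff image_iff eq_commute[of _ "qtrace _"])

lemma nonzero_in_qtrace_kernel: "\<exists>s. s \<noteq> 0 \<and> qtrace s = 0"
proof (rule ccontr)
  assume "\<not> ?thesis"
  then have "{x. qtrace x = 0} \<subseteq> {0}"
    by auto
  then have "card {x. qtrace x = 0} \<le> card {0 :: 'b}"
    by (rule card_mono[rotated]) simp
  then show False
    using card_qtrace_range_kernel q_ge_2 by simp
qed

definition herm :: "'b^'n \<Rightarrow> 'b^'n \<Rightarrow> 'b" where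
  "herm x y = dot (\<chi> k. qconj (x $ k)) y"

lemma herm_eq_sum: "herm x y = (\<Sum>k\<in>UNIV. qconj (x $ k) * y $ k)"
  by (simp add: herm_def dot_def)

lemma herm_add_right: "herm x (y + z) = herm x y + herm x z"
  by (simp add: herm_def dot_add_right)

lemma herm_scale_right: "herm x (a *s y) = a * herm x y"
  by (simp add: herm_def dot_scale_right)

lemma herm_diff_right: "herm x (y - z) = herm x y - herm x z"
  by (simp add: herm_def dot_diff_right)

lemma herm_add_left: "herm (x + y) z = herm x z + herm y z"
  by (simp add: herm_eq_sum qconj_add algebra_simps sum.distrib)

lemma herm_scale_left: "herm (a *s x) y = qconj a * herm x y"
  by (simp add: herm_eq_sum qconj_mult algebra_simps sum_distrib_left)

lemma herm_diff_left: "herm (x - y) z = herm x z - herm y z"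
  by (simp add: herm_eq_sum qconj_diff algebra_simps sum_subtractf)

lemma herm_uminus_right: "herm x (- y) = - herm x y"
  using herm_diff_right[of x 0 y] by (simp add: herm_def dot_def)

lemma herm_uminus_left: "herm (- x) y = - herm x y"
  using herm_diff_left[of 0 x y] by (simp add: herm_eq_sum)

lemma herm_zero_left [simp]: "herm 0 y = 0"
  by (simp add: herm_eq_sum)

lemma herm_sym: "herm y x = qconj (herm x y)"
  by (simp add: herm_eq_sum qconj_sum qconj_mult mult.commute)

lemma qconj_herm_self: "qconj (herm x x) = herm x x"
  using herm_sym[of x x] by simp

lemma dot_eq_herm: "dot c y = herm (\<chi> k. qconj (c $ k)) y"
  by (simp add: herm_def)

lemma herm_axis_left: "herm (axis k 1) y = y $ k"
proof -
  have "herm (axis k 1) y = (\<Sum>i\<in>UNIV. if i = k then y $ k else 0)"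
    unfolding herm_eq_sum by (intro sum.cong) (auto simp: axis_def)
  then show ?thesis
    by simp
qed

lemma herm_nondegenerate: "(\<And>x. herm x y = 0) \<Longrightarrow> y = 0"
  using herm_axis_left[of _ y] by (simp add: vec_eq_iff)

lemma herm_eq_on_span:
  assumes "\<forall>p\<in>S. herm p a = herm p b" "u \<in> vec.span S"
  shows "herm u a = herm u b"
  using assms(2) by (induction rule: vec.span_induct_alt) (simp_all add: assms(1) herm_add_left herm_scale_left)

lemma herm_matrix_vector_mult_left: "herm (A *v x) y = herm x (conj_transpose q A *v y)"
proof -
  have "herm (A *v x) y = (\<Sum>k\<in>UNIV. \<Sum>i\<in>UNIV. qconj (x $ i) * (qconj (A $ k $ i) * y $ k))"
    by (simp add: herm_eq_sum matrix_vector_mult_def qconj_sum qconj_mult sum_distrib_left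
        sum_distrib_right mult_ac)
  also have "\<dots> = (\<Sum>i\<in>UNIV. \<Sum>k\<in>UNIV. qconj (x $ i) * (qconj (A $ k $ i) * y $ k))"
    by (rule sum.swap)
  also have "\<dots> = herm x (conj_transpose q A *v y)"
    by (simp add: herm_eq_sum matrix_vector_mult_def conj_transpose_def qconj_def sum_distrib_left)
  finally show ?thesis .
qed

lemma GU_grp_iff_preserves_herm:
  "A \<in> (GU_grp q :: ('b^'n^'n) set) \<longleftrightarrow> (\<forall>x y. herm (A *v x) (A *v y) = herm x y)"
proof -
  have "herm (A *v x) (A *v y) = herm x ((conj_transpose q A ** A) *v y)" for x y
    by (simp add: herm_matrix_vector_mult_left matrix_vector_mul_assoc)
  moreover have "(\<forall>x y. herm x ((conj_transpose q A ** A) *v y) = herm x y)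
      \<longleftrightarrow> conj_transpose q A ** A = mat 1"
  proof
    assume "\<forall>x y. herm x ((conj_transpose q A ** A) *v y) = herm x y"
    then have "(conj_transpose q A ** A) *v y - y = 0" for y
      by (intro herm_nondegenerate) (simp add: herm_diff_right)
    then show "conj_transpose q A ** A = mat 1"
      by (simp add: matrix_eq)
  qed simp
  ultimately show ?thesis
    by (simp add: GU_grp_def)
qed

lemma GU_grp_mult: "A \<in> GU_grp q \<Longrightarrow> B \<in> GU_grp q \<Longrightarrow> A ** B \<in> (GU_grp q :: ('b^'n^'n) set)"
  by (simp add: GU_grp_iff_preserves_herm flip: matrix_vector_mul_assoc)

lemma GU_grp_one: "mat 1 \<in> (GU_grp q :: ('b^'n^'n) set)"
  by (simp add: GU_grp_iff_preserves_herm)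

lemma inj_GU_grp: "A \<in> (GU_grp q :: ('b^'n^'n) set) \<Longrightarrow> inj ((*v) A)"
  unfolding GU_grp_def using matrix_left_invertible_injective by blast

text \<open>The transvection \<open>y \<mapsto> y - (\<langle>x, y\<rangle> / a) x\<close> with \<open>x = v - w\<close> and \<open>a = \<langle>x, v\<rangle>\<close> maps \<open>v\<close>
  to \<open>w\<close>; it is unitary because equal norms give \<open>\<langle>x, x\<rangle> = a + a\<^sup>q\<close>.\<close>
lemma GU_transvection_step:
  assumes perp: "\<forall>u\<in>U. herm u (v - w) = 0" and norm: "herm v v = herm w w"
    and nonzero: "herm (v - w) v \<noteq> 0"
  shows "\<exists>C\<in>GU_grp q. (\<forall>u\<in>U. C *v u = u) \<and> C *v (v :: 'b^'n) = w"
proof -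
  define x where "x = v - w"
  define a where "a = herm x v"
  define \<phi> where "\<phi> y = - herm x y / a" for y
  define c where "c = (- 1 / a) *s (\<chi> k. qconj (x $ k))"
  define C where "C = transvection c x"
  have a: "a \<noteq> 0"
    using nonzero by (simp add: a_def x_def)
  have "dot c y = \<phi> y" for y
    unfolding c_def dot_scale_left by (simp add: \<phi>_def herm_def)
  then have C: "C *v y = y + \<phi> y *s x" for y
    by (simp add: C_def transvection_apply)
  have herm_x_left: "herm x y = - a * \<phi> y" for y
    using a by (simp add: \<phi>_def)
  have herm_x_right: "herm y x = - qconj a * qconj (\<phi> y)" for y
    by (simp add: herm_sym[of y x] herm_x_left qconj_mult qconj_uminus)
  have "qconj a = herm v x"
    by (simp add: a_def herm_sym[of v x])
  then have herm_x_x: "herm x x = a + qconj a"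
    using norm by (simp add: a_def x_def herm_diff_left herm_diff_right herm_sym[of w v])
  have "herm (C *v y) (C *v z) = herm y z" for y z
  proof -
    have "herm (C *v y) (C *v z)
        = herm y z + \<phi> z * herm y x + qconj (\<phi> y) * herm x z + qconj (\<phi> y) * \<phi> z * herm x x"
      by (simp add: C herm_add_left herm_add_right herm_scale_left herm_scale_right algebra_simps)
    also have "\<dots> = herm y z"
      unfolding herm_x_x by (simp add: herm_x_left herm_x_right algebra_simps)
    finally show ?thesis .
  qed
  then have "C \<in> GU_grp q"
    by (simp add: GU_grp_iff_preserves_herm)
  moreover have "C *v u = u" if "u \<in> U" for u
    using perp that herm_sym[of u x] by (simp add: C \<phi>_def x_def)
  moreover have "C *v v = w"
    using a by (simp add: C \<phi>_def a_def x_def)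
  ultimately show ?thesis
    by blast
qed

text \<open>With \<open>\<alpha> = \<langle>y, v\<rangle>\<close> and \<open>\<beta> = \<langle>y, y\<rangle>\<close> the equation below says that \<open>v + t y\<close> has the same
  norm as \<open>v\<close>.  It is solved via the trace: either \<open>qtrace s = 0\<close> for \<open>\<beta> = 0\<close>, or
  \<open>qtrace (1 / s) = - \<beta> / (\<alpha> \<alpha>\<^sup>q)\<close>, with \<open>t = s\<^sup>q / \<alpha>\<^sup>q\<close>.\<close>
lemma exists_nonzero_norm_preserving_shift:
  assumes "\<alpha> \<noteq> 0" "qconj \<beta> = \<beta>"
  shows "\<exists>t. t \<noteq> 0 \<and> t * qconj \<alpha> + qconj t * \<alpha> + qconj t * t * \<beta> = 0"
proof (cases "\<beta> = 0")
  case True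
  obtain s where s: "s \<noteq> 0" "qtrace s = 0"
    using nonzero_in_qtrace_kernel by blast
  define t where "t = qconj s / qconj \<alpha>"
  have "t * qconj \<alpha> + qconj t * \<alpha> + qconj t * t * \<beta> = qtrace s"
    using assms True by (simp add: t_def qtrace_def qconj_divide add.commute)
  then show ?thesis
    using s assms by (intro exI[of _ t]) (simp add: t_def)
next
  case False
  define c where "c = - \<beta> / (\<alpha> * qconj \<alpha>)"
  have "qconj c = c"
    using assms by (simp add: c_def qconj_divide qconj_mult qconj_uminus mult.commute)
  then obtain u where u: "qtrace u = c"
    using qtrace_onto_fixed by blast
  have "u \<noteq> 0"
    using u False assms by (auto simp: c_def qtrace_def)
  define t where "t = qconj (1 / u) / qconj \<alpha>"
  have "t * qconj \<alpha> + qconj t * \<alpha> + qconj t * t * \<beta>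
      = (qtrace u - c) / (u * qconj u)"
    using assms \<open>u \<noteq> 0\<close> by (simp add: t_def c_def qtrace_def qconj_divide qconj_mult field_simps)
  then show ?thesis
    using u assms \<open>u \<noteq> 0\<close> by (intro exI[of _ t]) (simp add: t_def)
qed

text \<open>When \<open>\<langle>v - w, v\<rangle> = 0\<close> a single transvection cannot map \<open>v\<close> to \<open>w\<close>; instead pass through
  \<open>z = v + t y\<close> of the same norm, with \<open>y\<close> orthogonal to \<open>S\<close> but not to \<open>v\<close> and \<open>w\<close>.\<close>
lemma exists_intermediate_vector:
  fixes S :: "('b^'n) set"
  assumes v: "v \<notin> vec.span S" and w: "w \<notin> vec.span S"
    and perp: "\<forall>u\<in>vec.span S. herm u (v - w) = 0" and norm: "herm v v = herm w w"
    and degenerate: "herm (v - w) v = 0"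
  obtains z where "herm z z = herm v v"
    "\<forall>u\<in>vec.span S. herm u (v - z) = 0" "herm (v - z) v \<noteq> 0"
    "\<forall>u\<in>vec.span S. herm u (z - w) = 0" "herm (z - w) z \<noteq> 0"
proof -
  obtain c where c: "\<forall>u\<in>vec.span S. dot c u = 0" "dot c v \<noteq> 0" "dot c w \<noteq> 0"
    using exists_dot_nonzero_off_span[OF v w] by blast
  define y where "y = (\<chi> k. qconj (c $ k))"
  have "c = (\<chi> k. qconj (y $ k))"
    by (simp add: y_def vec_eq_iff)
  then have "herm y u = dot c u" for u
    by (simp add: dot_eq_herm)
  then have y: "\<forall>u\<in>vec.span S. herm u y = 0" "herm y v \<noteq> 0" "herm y w \<noteq> 0"
    using c by (simp_all add: herm_sym[of _ y])
  define \<alpha> where "\<alpha> = herm y v"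
  define \<beta> where "\<beta> = herm y y"
  obtain t where t: "t \<noteq> 0" "t * qconj \<alpha> + qconj t * \<alpha> + qconj t * t * \<beta> = 0"
    using exists_nonzero_norm_preserving_shift[of \<alpha> \<beta>] y(2) qconj_herm_self
    by (auto simp: \<alpha>_def \<beta>_def)
  define z where "z = v + t *s y"
  have herm_v_y: "herm v y = qconj \<alpha>"
    by (simp add: \<alpha>_def herm_sym[of v y])
  have "herm z z = herm v v + (t * qconj \<alpha> + qconj t * \<alpha> + qconj t * t * \<beta>)"
    by (simp add: z_def herm_add_left herm_add_right herm_scale_left herm_scale_right herm_v_y
        \<alpha>_def [symmetric] \<beta>_def [symmetric] algebra_simps)
  then have "herm z z = herm v v"
    using t by simp
  moreover have "v - z = (- t) *s y"
    by (simp add: z_def)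
  then have "\<forall>u\<in>vec.span S. herm u (v - z) = 0" "herm (v - z) v \<noteq> 0"
    using t y by (simp_all add: herm_uminus_right herm_uminus_left herm_scale_right herm_scale_left)
  moreover have "\<forall>u\<in>vec.span S. herm u (z - w) = 0"
    using perp y(1) by (simp add: z_def herm_diff_right herm_add_right herm_scale_right)
  moreover have "herm (z - w) z \<noteq> 0"
  proof -
    have herm_vw_y: "herm (v - w) y = qconj \<alpha> - qconj (herm y w)"
      by (simp add: herm_diff_left herm_v_y herm_sym[of w y])
    have shift: "qconj t * \<alpha> + qconj t * t * \<beta> = - (t * qconj \<alpha>)"
      using t(2) by (simp add: algebra_simps eq_neg_iff_add_eq_0)
    have "herm (z - w) z
        = herm (v - w) v + t * herm (v - w) y + (qconj t * \<alpha> + qconj t * t * \<beta>)"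
      by (simp add: z_def herm_add_left herm_add_right herm_scale_left herm_scale_right
          herm_diff_left herm_diff_right \<alpha>_def [symmetric] \<beta>_def [symmetric] algebra_simps)
    also have "\<dots> = t * (qconj \<alpha> - qconj (herm y w)) + - (t * qconj \<alpha>)"
      by (simp only: degenerate herm_vw_y shift) simp
    finally have "herm (z - w) z = - (t * qconj (herm y w))"
      by (simp add: algebra_simps)
    then show ?thesis
      using t(1) y(3) by simp
  qed
  ultimately show ?thesis
    using that by blast
qed

lemma GU_extend_off_span:
  fixes S :: "('b^'n) set"
  assumes v: "v \<notin> vec.span S" and w: "w \<notin> vec.span S"
    and same_products: "\<forall>u\<in>vec.span S. herm u v = herm u w" and norm: "herm v v = herm w w"
  shows "\<exists>C\<in>GU_grp q. (\<forall>u\<in>vec.span S. C *v u = u) \<and> C *v v = w"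
proof -
  have perp: "\<forall>u\<in>vec.span S. herm u (v - w) = 0"
    using same_products by (simp add: herm_diff_right)
  show ?thesis
  proof (cases "herm (v - w) v = 0")
    case False
    then show ?thesis
      using GU_transvection_step[OF perp norm] by blast
  next
    case True
    then obtain z where z: "herm z z = herm v v"
      "\<forall>u\<in>vec.span S. herm u (v - z) = 0" "herm (v - z) v \<noteq> 0"
      "\<forall>u\<in>vec.span S. herm u (z - w) = 0" "herm (z - w) z \<noteq> 0"
      using exists_intermediate_vector[OF v w perp norm] by blast
    obtain C1 where C1: "C1 \<in> GU_grp q" "\<forall>u\<in>vec.span S. C1 *v u = u" "C1 *v v = z"
      using GU_transvection_step[OF z(2) _ z(3)] z(1) by fastforce
    obtain C2 where C2: "C2 \<in> GU_grp q" "\<forall>u\<in>vec.span S. C2 *v u = u" "C2 *v z = w"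
      using GU_transvection_step[OF z(4) _ z(5)] z(1) norm by fastforce
    have "\<forall>u\<in>vec.span S. (C2 ** C1) *v u = u" "(C2 ** C1) *v v = w"
      using C1 C2 by (simp_all flip: matrix_vector_mul_assoc)
    then show ?thesis
      using GU_grp_mult[OF C2(1) C1(1)] by blast
  qed
qed

definition herm_data :: "('b^'n) list \<Rightarrow> 'b^'n \<Rightarrow> 'b list \<times> 'b" where
  "herm_data ps v = (map (\<lambda>p. herm p v) ps, herm v v)"

lemma card_GU_tuple_orbits_le:
  "card (tuple_orbits (GU_grp q :: ('b^'n^'n) set) j)
    \<le> (\<Sum>k\<le>j. code_count (q ^ 2) (\<lambda>l. q ^ (2 * l) * q) j k)"
proof -
  have "card (tuple_orbits (GU_grp q :: ('b^'n^'n) set) j)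
      \<le> card (pivot_code herm_data ` {xs :: ('b^'n) list. length xs = j})"
  proof (rule card_tuple_orbits_le)
    show "A ** B \<in> GU_grp q" if "A \<in> GU_grp q" "B \<in> GU_grp q" for A B :: "'b^'n^'n"
      using that by (rule GU_grp_mult)
    show "\<exists>A\<in>GU_grp q. map ((*v) A) xs = ys"
      if "pivot_code herm_data xs = pivot_code herm_data ys" for xs ys :: "('b^'n) list"
    proof (rule pivot_code_eq_imp_same_orbit[OF GU_grp_mult GU_grp_one inj_GU_grp _ _ that])
      show "herm_data (map ((*v) A) ps) (A *v v) = herm_data ps v" if "A \<in> GU_grp q" for A ps v
        using that by (simp add: herm_data_def GU_grp_iff_preserves_herm)
      show "\<exists>C\<in>GU_grp q. (\<forall>u\<in>vec.span (set ps). C *v u = u) \<and> C *v v = w"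
        if "v \<notin> vec.span (set ps)" "w \<notin> vec.span (set ps)" "herm_data ps v = herm_data ps w"
        for ps and v w :: "'b^'n"
      proof (rule GU_extend_off_span[OF that(1,2)])
        show "\<forall>u\<in>vec.span (set ps). herm u v = herm u w"
          using that(3) herm_eq_on_span[of "set ps" v w] by (simp add: herm_data_def)
        show "herm v v = herm w w"
          using that(3) by (simp add: herm_data_def)
      qed
    qed
  qed
  also have "\<dots> \<le> (\<Sum>k\<le>j. code_count (q ^ 2) (\<lambda>l. q ^ (2 * l) * q) j k)"
  proof -
    have "card ({c :: 'b list. length c = l} \<times> {x. qconj x = x}) \<le> q ^ (2 * l) * q" for l
      using card_qconj_fixed_le
      by (simp add: card_cartesian_product card_lists_length_UNIV card_eq power_mult)
    then show ?thesis
      using card_pivot_codes_le[where D = "\<lambda>l. {c. length c = l} \<times> {x. qconj x = x}"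
          and b = "\<lambda>l. q ^ (2 * l) * q" and g = herm_data]
      by (simp add: card_eq herm_data_def qconj_herm_self finite_list_length)
  qed
  finally show ?thesis .
qed

end

section \<open>Estimates\<close>

lemma prod_one_minus_ge_one_minus_sum:
  fixes a :: "'i \<Rightarrow> real"
  assumes "finite A" and "\<And>i. i \<in> A \<Longrightarrow> 0 \<le> a i \<and> a i \<le> 1"
  shows "1 - (\<Sum>i\<in>A. a i) \<le> (\<Prod>i\<in>A. 1 - a i)"
  using assms
proof (induction A rule: finite_induct)
  case (insert j A)
  have "0 \<le> a j" "a j \<le> 1" "0 \<le> (\<Sum>i\<in>A. a i)"
    using insert.prems by (auto intro: sum_nonneg)
  then have "1 - (a j + (\<Sum>i\<in>A. a i)) \<le> (1 - a j) * (1 - (\<Sum>i\<in>A. a i))"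
    by (simp add: algebra_simps mult_nonneg_nonneg)
  also have "\<dots> \<le> (1 - a j) * (\<Prod>i\<in>A. 1 - a i)"
    using insert \<open>a j \<le> 1\<close> by (intro mult_left_mono) auto
  finally show ?case
    using insert.hyps by simp
qed simp

lemma sum_power_le_geometric:
  fixes x :: real
  assumes "0 \<le> x" "x < 1"
  shows "(\<Sum>i=m..n. x ^ i) \<le> x ^ m / (1 - x)"
proof -
  have "(\<Sum>i=m..n. x ^ i) = (if n < m then 0 else (x ^ m - x ^ Suc n) / (1 - x))"
    using assms by (simp add: sum_gp)
  then show ?thesis
    using assms by (auto intro!: divide_right_mono)
qed

definition q_pochhammer :: "real \<Rightarrow> nat \<Rightarrow> real" where
  "q_pochhammer x k = (\<Prod>i=1..k. 1 - x ^ i)"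

lemma q_pochhammer_Suc: "q_pochhammer x (Suc k) = q_pochhammer x k * (1 - x ^ Suc k)"
  by (simp add: q_pochhammer_def)

lemma q_pochhammer_pos:
  assumes "0 \<le> x" "x < 1"
  shows "0 < q_pochhammer x k"
  unfolding q_pochhammer_def using assms by (intro prod_pos) (simp add: power_less_one_iff)

lemma q_pochhammer_Suc_split:
  assumes "0 \<le> x" "x < 1"
  shows "x ^ Suc k / q_pochhammer x (Suc k) + 1 / q_pochhammer x k = 1 / q_pochhammer x (Suc k)"
proof -
  have "x ^ Suc k \<le> x"
    using assms power_decreasing[of 1 "Suc k" x] by simp
  then show ?thesis
    using assms q_pochhammer_pos[OF assms, of k] by (simp add: q_pochhammer_Suc field_simps)
qed

lemma q_pochhammer_ge_two_thirds:
  assumes "0 \<le> x" "x \<le> 1/4"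
  shows "2/3 \<le> q_pochhammer x k"
proof -
  have "(\<Sum>i=1..k. x ^ i) \<le> x / (1 - x)"
    using sum_power_le_geometric[of x 1 k] assms by simp
  also have "\<dots> \<le> 1/3"
    using assms by (simp add: field_simps)
  finally show ?thesis
    using prod_one_minus_ge_one_minus_sum[of "{1..k}" "\<lambda>i. x ^ i"] assms
    by (simp add: q_pochhammer_def power_le_one)
qed

text \<open>The first three factors give at least \<open>21/64\<close>; the remaining ones together lose at most
  \<open>\<Sum>i \<ge> 4. 2^-i = 1/8\<close>, and \<open>21/64 \<cdot> 7/8 \<ge> 2/7\<close>.\<close>
lemma q_pochhammer_ge_two_sevenths:
  assumes "0 \<le> x" "x \<le> 1/2"
  shows "2/7 \<le> q_pochhammer x k"
proof -
  have factor: "1 - (1/2) ^ i \<le> 1 - x ^ i" "0 \<le> 1 - x ^ i" for i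
    using assms by (auto intro!: power_mono power_le_one)
  have head: "21/64 \<le> (\<Prod>i\<in>{1..k} \<inter> {..3}. 1 - x ^ i)"
  proof -
    have "(21/64::real) \<le> (\<Prod>i\<in>{1..k} \<inter> {..3}. 1 - (1/2) ^ i)"
      by (cases "k \<le> 3") (auto simp: numeral_eq_Suc atLeastAtMostSuc_conv le_Suc_eq
          Int_absorb1 Int_absorb2 elim!: le_SucE)
    also have "\<dots> \<le> (\<Prod>i\<in>{1..k} \<inter> {..3}. 1 - x ^ i)"
      using factor by (intro prod_mono) (auto simp: power_le_one)
    finally show ?thesis .
  qed
  have tail: "{1..k} - {..3} = {4..k}"
    by auto
  have "(\<Sum>i\<in>{1..k} - {..3}. x ^ i) \<le> (\<Sum>i=4..k. (1/2) ^ i)"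
    unfolding tail using assms by (intro sum_mono power_mono) auto
  also have "\<dots> \<le> 1/8"
    using sum_power_le_geometric[of "1/2 :: real" 4 k] by (simp add: power_divide)
  finally have "7/8 \<le> (\<Prod>i\<in>{1..k} - {..3}. 1 - x ^ i)"
    using prod_one_minus_ge_one_minus_sum[of "{1..k} - {..3}" "\<lambda>i. x ^ i"] assms
    by (simp add: power_le_one)
  then have "21/64 * (7/8) \<le> (\<Prod>i\<in>{1..k} \<inter> {..3}. 1 - x ^ i) * (\<Prod>i\<in>{1..k} - {..3}. 1 - x ^ i)"
    using head by (intro mult_mono) (auto intro: prod_nonneg simp: factor)
  also have "\<dots> = q_pochhammer x k"
    unfolding q_pochhammer_def by (rule prod.Int_Diff[symmetric]) simp
  finally show ?thesis
    by simp
qed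

lemma code_count_eq_0: "m < k \<Longrightarrow> code_count Q b m k = 0"
  by (induction m arbitrary: k) auto

lemma code_count_le:
  fixes x :: real and E :: "nat \<Rightarrow> nat \<Rightarrow> real"
  assumes x: "0 \<le> x" "x < 1"
    and E_0: "E 0 0 = 1" and E_nonneg: "\<And>m k. 0 \<le> E m k"
    and base: "\<And>m. real (b m) * E m 0 \<le> E (Suc m) 0"
    and keep: "\<And>m k. k \<le> m \<Longrightarrow> real (b (m - k)) * E m k = E (Suc m) k * x ^ k"
    and raise: "\<And>m k. k \<le> m \<Longrightarrow> real Q ^ (m - k) * E m k = E (Suc m) (Suc k)"
  shows "k \<le> m \<Longrightarrow> real (code_count Q b m k) \<le> E m k / q_pochhammer x k"
proof (induction m arbitrary: k)
  case 0
  then show ?case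
    by (simp add: E_0 q_pochhammer_def)
next
  case (Suc m)
  have P_pos: "0 < q_pochhammer x i" for i
    using q_pochhammer_pos[OF x] .
  show ?case
  proof (cases k)
    case 0
    have "real (code_count Q b (Suc m) 0) = real (b m) * real (code_count Q b m 0)"
      by simp
    also have "\<dots> \<le> real (b m) * E m 0"
      using Suc.IH[of 0] by (intro mult_left_mono) (simp_all add: q_pochhammer_def)
    also have "\<dots> \<le> E (Suc m) 0"
      by (rule base)
    finally show ?thesis
      using 0 by (simp add: q_pochhammer_def)
  next
    case (Suc k')
    with Suc.prems have "k' \<le> m"
      by simp
    have first: "real (b (m - k)) * real (code_count Q b m k) \<le> E (Suc m) k * x ^ k / q_pochhammer x k"
    proof (cases "k \<le> m")
      case True
      then have "real (b (m - k)) * real (code_count Q b m k) \<le> real (b (m - k)) * (E m k / q_pochhammer x k)"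
        using Suc.IH by (intro mult_left_mono) simp_all
      then show ?thesis
        using keep[OF True] by simp
    next
      case False
      have "0 \<le> E (Suc m) k * x ^ k / q_pochhammer x k"
        using E_nonneg P_pos[of k] x by (intro divide_nonneg_pos mult_nonneg_nonneg) simp_all
      then show ?thesis
        using code_count_eq_0[of m k] False by simp
    qed
    have second: "real Q ^ (m - k') * real (code_count Q b m k') \<le> E (Suc m) k / q_pochhammer x k'"
      using mult_left_mono[OF Suc.IH[OF \<open>k' \<le> m\<close>], of "real Q ^ (m - k')"] raise[OF \<open>k' \<le> m\<close>]
      by (simp add: \<open>k = Suc k'\<close>)
    have "real (code_count Q b (Suc m) k)
        = real (b (m - k)) * real (code_count Q b m k) + real Q ^ (m - k') * real (code_count Q b m k')"
      by (simp add: \<open>k = Suc k'\<close>)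
    also have "\<dots> \<le> E (Suc m) k * x ^ k / q_pochhammer x k + E (Suc m) k / q_pochhammer x k'"
      using first second by (rule add_mono)
    also have "\<dots> = E (Suc m) k * (x ^ k / q_pochhammer x k + 1 / q_pochhammer x k')"
      by (simp add: distrib_left)
    finally show ?thesis
      using q_pochhammer_Suc_split[OF x, of k'] by (simp add: \<open>k = Suc k'\<close>)
  qed
qed

lemma code_count_GL_le:
  assumes q: "2 \<le> q" and "k \<le> m"
  shows "real (code_count q (\<lambda>_. 1) m k) \<le> real q ^ (k * (m - k)) / q_pochhammer (1 / real q) k"
proof (rule code_count_le[OF _ _ _ _ _ _ _ \<open>k \<le> m\<close>])
  show "real (1::nat) * real q ^ (k * (m - k)) = real q ^ (k * (Suc m - k)) * (1 / real q) ^ k"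
    if "k \<le> m" for m k
  proof -
    have "k * (Suc m - k) = k * (m - k) + k"
      using that by (simp add: Suc_diff_le)
    then show ?thesis
      using q by (simp add: power_add power_one_over)
  qed
  show "real q ^ (m - k) * real q ^ (k * (m - k)) = real q ^ (Suc k * (Suc m - Suc k))" for m k
  proof -
    have "Suc k * (Suc m - Suc k) = (m - k) + k * (m - k)"
      by simp
    then show ?thesis
      by (simp only: power_add)
  qed
qed (use q in simp_all)

lemma code_count_GU_le:
  assumes q: "2 \<le> q" and "k \<le> m"
  shows "real (code_count (q ^ 2) (\<lambda>l. q ^ (2 * l) * q) m k)
    \<le> real q ^ (m * m - k * k) / q_pochhammer (1 / real q ^ 2) k"
proof (rule code_count_le[OF _ _ _ _ _ _ _ \<open>k \<le> m\<close>])
  show "real (q ^ (2 * m) * q) * real q ^ (m * m - 0 * 0) \<le> real q ^ (Suc m * Suc m - 0 * 0)" for m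
  proof -
    have "Suc m * Suc m = 2 * m + 1 + m * m"
      by simp
    then have "q ^ (Suc m * Suc m) = q ^ (2 * m) * q * q ^ (m * m)"
      by (simp only: power_add power_one_right)
    then show ?thesis
      by (metis diff_zero mult_zero_left of_nat_mult of_nat_power order_refl)
  qed
  show "real (q ^ (2 * (m - k)) * q) * real q ^ (m * m - k * k)
      = real q ^ (Suc m * Suc m - k * k) * (1 / real q ^ 2) ^ k" if "k \<le> m" for m k
  proof -
    obtain d where m: "m = k + d"
      using \<open>k \<le> m\<close> le_Suc_ex by blast
    have "Suc m * Suc m - k * k = 2 * d + 1 + (d * d + 2 * k * d) + 2 * k"
      by (simp add: m algebra_simps)
    moreover have "m * m - k * k = d * d + 2 * k * d"
      by (simp add: m algebra_simps)
    ultimately show ?thesis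
      using q by (simp add: m power_add power_mult power_one_over power2_eq_square power_mult_distrib
          field_simps)
  qed
  show "real (q ^ 2) ^ (m - k) * real q ^ (m * m - k * k) = real q ^ (Suc m * Suc m - Suc k * Suc k)"
    if "k \<le> m" for m k
  proof -
    obtain d where m: "m = k + d"
      using \<open>k \<le> m\<close> le_Suc_ex by blast
    have "Suc m * Suc m - Suc k * Suc k = 2 * d + (d * d + 2 * k * d)"
      by (simp add: m algebra_simps)
    moreover have "m * m - k * k = d * d + 2 * k * d"
      by (simp add: m algebra_simps)
    ultimately show ?thesis
      by (simp add: m power_add power_mult)
  qed
qed (use q in \<open>simp_all add: power_le_one\<close>)

definition quadratic_power_sum :: "nat \<Rightarrow> nat \<Rightarrow> real" where
  "quadratic_power_sum q m = (\<Sum>k\<le>m. real q ^ (k * (m - k)))"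

lemma quadratic_power_sum_Suc_Suc:
  "quadratic_power_sum q (Suc (Suc m)) = 2 + real q ^ Suc m * quadratic_power_sum q m"
proof -
  have "real q ^ (Suc k * (Suc m - k)) = real q ^ Suc m * real q ^ (k * (m - k))" if "k \<le> m" for k
  proof -
    have "Suc k * (Suc m - k) = Suc m + k * (m - k)"
      using that by (simp add: Suc_diff_le)
    then show ?thesis
      by (simp only: power_add)
  qed
  then have sum_eq: "(\<Sum>k\<le>m. real q ^ (Suc k * (Suc m - k))) = real q ^ Suc m * quadratic_power_sum q m"
    by (simp add: quadratic_power_sum_def sum_distrib_left)
  have "quadratic_power_sum q (Suc (Suc m)) = 1 + (\<Sum>k\<le>Suc m. real q ^ (Suc k * (Suc (Suc m) - Suc k)))"
    unfolding quadratic_power_sum_def by (subst sum.atMost_Suc_shift) simp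
  also have "(\<Sum>k\<le>Suc m. real q ^ (Suc k * (Suc (Suc m) - Suc k)))
      = (\<Sum>k\<le>m. real q ^ (Suc k * (Suc m - k))) + 1"
    by (subst sum.atMost_Suc) simp
  finally show ?thesis
    by (simp only: sum_eq)
qed

lemma quadratic_power_sum_even:
  assumes q: "2 \<le> q" and "1 \<le> p"
  shows "quadratic_power_sum q (2 * p) \<le> 13/6 * real q ^ (p * p) - 2/7"
  using \<open>1 \<le> p\<close>
proof (induction p rule: dec_induct)
  case base
  have "quadratic_power_sum q 2 = 2 + real q"
    by (simp add: quadratic_power_sum_def numeral_2_eq_2)
  then show ?case
    using q by simp
next
  case (step p)
  have "(2::real) ^ 3 \<le> 2 ^ Suc (2 * p)"
    using step.hyps by (intro power_increasing) auto
  also have "\<dots> \<le> real q ^ Suc (2 * p)"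
    using q by (intro power_mono) auto
  finally have q_pow: "8 \<le> real q ^ Suc (2 * p)"
    by simp
  have "quadratic_power_sum q (2 * Suc p) = 2 + real q ^ Suc (2 * p) * quadratic_power_sum q (2 * p)"
    using quadratic_power_sum_Suc_Suc[of q "2 * p"] by simp
  also have "\<dots> \<le> 2 + real q ^ Suc (2 * p) * (13/6 * real q ^ (p * p) - 2/7)"
    using step.IH by (intro add_left_mono mult_left_mono) auto
  also have "\<dots> = 13/6 * (real q ^ Suc (2 * p) * real q ^ (p * p)) + 2 - 2/7 * real q ^ Suc (2 * p)"
    by (simp add: algebra_simps)
  also have "real q ^ Suc (2 * p) * real q ^ (p * p) = real q ^ (Suc p * Suc p)"
  proof -
    have "Suc p * Suc p = Suc (2 * p) + p * p"
      by simp
    then show ?thesis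
      by (simp only: power_add)
  qed
  finally show ?case
    using q_pow by simp
qed

lemma quadratic_power_sum_odd:
  assumes q: "2 \<le> q"
  shows "quadratic_power_sum q (2 * p + 1) \<le> 8/3 * real q ^ (p * p + p) - 2/3"
proof (induction p)
  case 0
  then show ?case
    by (simp add: quadratic_power_sum_def)
next
  case (Suc p)
  have "(2::real) ^ 2 \<le> 2 ^ Suc (Suc (2 * p))"
    by (intro power_increasing) auto
  also have "\<dots> \<le> real q ^ Suc (Suc (2 * p))"
    using q by (intro power_mono) auto
  finally have q_pow: "4 \<le> real q ^ Suc (Suc (2 * p))"
    by simp
  have "quadratic_power_sum q (2 * Suc p + 1)
      = 2 + real q ^ Suc (Suc (2 * p)) * quadratic_power_sum q (2 * p + 1)"
    using quadratic_power_sum_Suc_Suc[of q "2 * p + 1"] by simp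
  also have "\<dots> \<le> 2 + real q ^ Suc (Suc (2 * p)) * (8/3 * real q ^ (p * p + p) - 2/3)"
    using Suc.IH by (intro add_left_mono mult_left_mono) auto
  also have "\<dots> = 8/3 * (real q ^ Suc (Suc (2 * p)) * real q ^ (p * p + p)) + 2
      - 2/3 * real q ^ Suc (Suc (2 * p))"
    by (simp add: algebra_simps)
  also have "real q ^ Suc (Suc (2 * p)) * real q ^ (p * p + p) = real q ^ (Suc p * Suc p + Suc p)"
  proof -
    have "Suc p * Suc p + Suc p = Suc (Suc (2 * p)) + (p * p + p)"
      by simp
    then show ?thesis
      by (simp only: power_add)
  qed
  finally show ?case
    using q_pow by simp
qed

lemma seven_sixths_le_powr_quarter:
  fixes x :: real
  assumes "2 \<le> x"
  shows "7/6 \<le> x powr (1/4)"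
proof -
  have "((7/6::real) ^ 4) powr (1/4) = (7/6) powr (real 4 * (1/4))"
    by (simp only: powr_realpow[of "7/6", symmetric] powr_powr)
  also have "\<dots> = 7/6"
    by simp
  finally have "((7/6::real) ^ 4) powr (1/4) = 7/6" .
  moreover have "(7/6::real) ^ 4 \<le> x"
    using assms by (simp add: power4_eq_xxxx)
  then have "((7/6::real) ^ 4) powr (1/4) \<le> x powr (1/4)"
    by (intro powr_mono2) auto
  ultimately show ?thesis
    by simp
qed

lemma quadratic_power_sum_le:
  assumes q: "2 \<le> q" and "1 \<le> j"
  shows "7/2 * quadratic_power_sum q j \<le> 8 * real q powr (real j ^ 2 / 4)"
proof (cases "even j")
  case True
  then obtain p where p: "j = 2 * p"
    by blast
  have "real j ^ 2 / 4 = real (p * p)"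
    by (simp add: p power2_eq_square)
  then have "real q powr (real j ^ 2 / 4) = real q powr real (p * p)"
    by (simp only:)
  also have "\<dots> = real q ^ (p * p)"
    using q by (intro powr_realpow) simp
  moreover have "quadratic_power_sum q j \<le> 13/6 * real q ^ (p * p) - 2/7"
    using quadratic_power_sum_even[OF q, of p] p \<open>1 \<le> j\<close> by simp
  moreover have "0 \<le> real q ^ (p * p)"
    by simp
  ultimately show ?thesis
    by linarith
next
  case False
  then obtain p where p: "j = 2 * p + 1"
    using oddE by blast
  have "7/6 \<le> real q powr (1/4)"
    using q by (intro seven_sixths_le_powr_quarter) simp
  have "real j ^ 2 / 4 = real (p * p + p) + 1/4"
    by (simp add: p power2_eq_square field_simps)
  then have "real q powr (real j ^ 2 / 4) = real q powr real (p * p + p) * real q powr (1/4)"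
    by (simp only: powr_add)
  also have "real q powr real (p * p + p) = real q ^ (p * p + p)"
    using q by (intro powr_realpow) simp
  finally have powr_eq: "real q powr (real j ^ 2 / 4) = real q ^ (p * p + p) * real q powr (1/4)" .
  have "7/2 * quadratic_power_sum q j \<le> 7/2 * (8/3 * real q ^ (p * p + p) - 2/3)"
    using quadratic_power_sum_odd[OF q, of p] p by simp
  also have "\<dots> \<le> 8 * (real q ^ (p * p + p) * (7/6))"
    by simp
  also have "\<dots> \<le> 8 * (real q ^ (p * p + p) * real q powr (1/4))"
    using \<open>7/6 \<le> real q powr (1/4)\<close> by (intro mult_left_mono) auto
  finally show ?thesis
    by (simp only: powr_eq)
qed

lemma sum_code_count_GL_le:
  assumes q: "2 \<le> q"
  shows "real (\<Sum>k\<le>m. code_count q (\<lambda>_. 1) m k) \<le> 7/2 * quadratic_power_sum q m"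
proof -
  have "real (code_count q (\<lambda>_. 1) m k) \<le> 7/2 * real q ^ (k * (m - k))" if "k \<le> m" for k
  proof -
    have "2/7 \<le> q_pochhammer (1 / real q) k"
      using q by (intro q_pochhammer_ge_two_sevenths) auto
    then have "real q ^ (k * (m - k)) / q_pochhammer (1 / real q) k \<le> real q ^ (k * (m - k)) / (2/7)"
      by (intro divide_left_mono) auto
    also have "\<dots> = 7/2 * real q ^ (k * (m - k))"
      by simp
    finally show ?thesis
      using code_count_GL_le[OF q that] by (rule order_trans[rotated])
  qed
  then have "(\<Sum>k\<le>m. real (code_count q (\<lambda>_. 1) m k)) \<le> (\<Sum>k\<le>m. 7/2 * real q ^ (k * (m - k)))"
    by (intro sum_mono) simp
  then show ?thesis
    by (simp add: quadratic_power_sum_def sum_distrib_left)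
qed

lemma three_mult_le_square_add_two: "3 * k \<le> k * k + (2::nat)"
proof (cases "k \<le> 2")
  case True
  then have "k = 0 \<or> k = 1 \<or> k = 2"
    by auto
  then show ?thesis
    by auto
next
  case False
  then have "3 * k \<le> k * k"
    using mult_le_mono1[of 3 k k] by simp
  then show ?thesis
    by linarith
qed

lemma power_diff_squares_le:
  assumes q: "2 \<le> q" and "k \<le> m"
  shows "real q ^ (m * m - k * k) \<le> 4 * (1/8) ^ k * real q ^ (m * m)"
proof -
  have "(8::real) ^ k = 2 ^ (3 * k)"
    by (simp add: power_mult)
  also have "\<dots> \<le> 2 ^ (k * k + 2)"
    by (intro power_increasing three_mult_le_square_add_two) simp
  also have "\<dots> \<le> 4 * real q ^ (k * k)"
    using q by (simp add: power_add power_mono)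
  finally have "real q ^ (m * m - k * k) * 8 ^ k \<le> real q ^ (m * m - k * k) * (4 * real q ^ (k * k))"
    by (intro mult_left_mono) auto
  also have "\<dots> = 4 * real q ^ (m * m)"
    using \<open>k \<le> m\<close> by (simp add: mult_le_mono flip: power_add)
  finally show ?thesis
    by (simp add: power_one_over field_simps)
qed

lemma code_count_GU_le_weighted:
  assumes q: "2 \<le> q" and "k \<le> m"
  shows "real (code_count (q ^ 2) (\<lambda>l. q ^ (2 * l) * q) m k)
    \<le> real q ^ (m * m) * (if k = 0 then 1 else 6 * (1/8) ^ k)"
proof (cases "k = 0")
  case True
  then show ?thesis
    using code_count_GU_le[OF assms] by (simp add: q_pochhammer_def)
next
  case False
  have "(2::real) ^ 2 \<le> real q ^ 2"
    using q by (intro power_mono) auto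
  then have "2/3 \<le> q_pochhammer (1 / real q ^ 2) k"
    using q by (intro q_pochhammer_ge_two_thirds) (auto simp: field_simps)
  then have "real q ^ (m * m - k * k) / q_pochhammer (1 / real q ^ 2) k \<le> 3/2 * real q ^ (m * m - k * k)"
    using q_pochhammer_pos[of "1 / real q ^ 2" k] q by (simp add: field_simps)
  then have "real (code_count (q ^ 2) (\<lambda>l. q ^ (2 * l) * q) m k)
      \<le> 3/2 * (4 * (1/8) ^ k * real q ^ (m * m))"
    using code_count_GU_le[OF assms] power_diff_squares_le[OF assms] by linarith
  then show ?thesis
    using False by simp
qed

lemma sum_code_count_GU_le:
  assumes q: "2 \<le> q"
  shows "real (\<Sum>k\<le>m. code_count (q ^ 2) (\<lambda>l. q ^ (2 * l) * q) m k) \<le> 2 * real q ^ (m * m)"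
proof -
  define w :: "nat \<Rightarrow> real" where "w k = (if k = 0 then 1 else 6 * (1/8) ^ k)" for k
  have "(\<Sum>k\<le>m. w k) = 1 + 6 * (\<Sum>k=1..m. (1/8) ^ k)"
    by (simp add: w_def atMost_atLeast0 sum.atLeast_Suc_atMost sum_distrib_left)
  also have "\<dots> \<le> 1 + 6 * (1/7)"
    using sum_power_le_geometric[of "1/8 :: real" 1 m] by simp
  finally have weights: "(\<Sum>k\<le>m. w k) \<le> 2"
    by simp
  have "real (\<Sum>k\<le>m. code_count (q ^ 2) (\<lambda>l. q ^ (2 * l) * q) m k)
      \<le> (\<Sum>k\<le>m. real q ^ (m * m) * w k)"
    unfolding of_nat_sum w_def by (intro sum_mono code_count_GU_le_weighted[OF q]) simp
  also have "\<dots> = real q ^ (m * m) * (\<Sum>k\<le>m. w k)"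
    by (simp add: sum_distrib_left)
  also have "\<dots> \<le> real q ^ (m * m) * 2"
    using weights by (intro mult_left_mono) auto
  finally show ?thesis
    by simp
qed

theorem lemma2p4:
  fixes q j :: nat
  assumes "1 \<le> j" and "j \<le> CARD('n::finite)"
  shows "(CARD('a::{field,finite}) = q \<longrightarrow>
            real (card (tuple_orbits (GL_grp :: ('a^'n^'n) set) j))
              \<le> 8 * real q powr (real j ^ 2 / 4))
       \<and> (CARD('b::{field,finite}) = q ^ 2 \<longrightarrow>
            real (card (tuple_orbits (GU_grp q :: ('b^'n^'n) set) j))
              \<le> 2 * real q ^ (j ^ 2))"
proof (intro conjI impI)
  assume card_a: "CARD('a) = q"
  then have q: "2 \<le> q"
    using card_field_ge_2[where 'a='a] by simp
  have "real (card (tuple_orbits (GL_grp :: ('a^'n^'n) set) j))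
      \<le> real (\<Sum>k\<le>j. code_count q (\<lambda>_. 1) j k)"
    using card_GL_tuple_orbits_le[where 'a='a and 'n='n and j=j] by (simp only: card_a of_nat_le_iff)
  also have "\<dots> \<le> 7/2 * quadratic_power_sum q j"
    by (rule sum_code_count_GL_le[OF q])
  also have "\<dots> \<le> 8 * real q powr (real j ^ 2 / 4)"
    by (rule quadratic_power_sum_le[OF q assms(1)])
  finally show "real (card (tuple_orbits (GL_grp :: ('a^'n^'n) set) j))
      \<le> 8 * real q powr (real j ^ 2 / 4)" .
next
  assume "CARD('b) = q ^ 2"
  then interpret unitary_field q "TYPE('b)"
    by unfold_locales
  have "real (card (tuple_orbits (GU_grp q :: ('b^'n^'n) set) j))
      \<le> real (\<Sum>k\<le>j. code_count (q ^ 2) (\<lambda>l. q ^ (2 * l) * q) j k)"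
    using card_GU_tuple_orbits_le[where 'n='n and j=j] by (simp only: of_nat_le_iff)
  also have "\<dots> \<le> 2 * real q ^ (j * j)"
    by (rule sum_code_count_GU_le[OF q_ge_2])
  finally show "real (card (tuple_orbits (GU_grp q :: ('b^'n^'n) set) j)) \<le> 2 * real q ^ (j ^ 2)"
    by (simp add: power2_eq_square)
qed

end
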